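(* Let $\mathcal S$ be a trajectory set and fix $n_0\in\mathbb N$. Suppose that for every $S\in\mathcal S$ and every $j\le n_0-1$ the node $\mathcal S_{(S,j)}$ is not an arbitrage node of type II. If $(V,n,H)$ is a positive simple portfolio with maturity $n\le n_0$, then $\Pi^{V,n,H}_j(S)\ge0$ for every $j\in\mathbb N_0$ and every $S\in\mathcal S$.
   Context: Fix $s_0\in\mathbb R$. A trajectory set is any set $\mathcal S$ of real sequences $S=(S_j)_{j\in\mathbb N_0}$ with $S_0=s_0$. A simple portfolio $(V,n,H)$ (with maturity $n$) consists of $V\in\mathbb R$, $n\in\mathbb N$ and nonanticipating functions $H_i:\mathcal S\to\mathbb R$, $0\le i\le n-1$ (i.e. $H_i(S)=h_i(S_0,\dots,S_i)$ for arbitrary $h_i:\mathbb R^{i+1}\to\mathbb R$). Its wealth is $\Pi^{V,n,H}_j(S)=V+\sum_{i=0}^{\min\{j,n\}-1}H_i(S)(S_{i+1}-S_i)$, $\Pi^{V,n,H}_\infty:=\Pi^{V,n,H}_n$; it is positive if $V\ge0$ and $\Pi^{V,n,H}_\infty(S)\ge0$ for all $S\in\mathcal S$. For $S\in\mathcal S$, $j\in\mathbb N_0$, the node is $\mathcal S_{(S,j)}=\{\tilde S\in\mathcal S:(\tilde S_0,\dots,\tilde S_j)=(S_0,\dots,S_j)\}$. It is an arbitrage node if for some $\varepsilon\in\{-1,1\}$, $\varepsilon(\tilde S_{j+1}-S_j)\ge0$ for all $\tilde S\in\mathcal S_{(S,j)}$ with strict inequality for at least one; of type I if some $S'\in\mathcal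 S_{(S,j)}$ has $S'_{j+1}=S_j$, and of type II otherwise. *)

theory Defs
  imports Complex_Main
begin

type_synonym traj = "nat \<Rightarrow> real"

definition trajectory_set :: "real \<Rightarrow> traj set \<Rightarrow> bool" where
  "trajectory_set s0 \<S> \<longleftrightarrow> (\<forall>S\<in>\<S>. S 0 = s0)"

text \<open>Nonanticipating strategy: H i S = h i (S_0,...,S_i), encoded via a list argument.\<close>
definition strat :: "(nat \<Rightarrow> real list \<Rightarrow> real) \<Rightarrow> nat \<Rightarrow> traj \<Rightarrow> real" where
  "strat h i S = h i (map S [0..<Suc i])"

definition wealth :: "real \<Rightarrow> nat \<Rightarrow> (nat \<Rightarrow> real list \<Rightarrow> real) \<Rightarrow> nat \<Rightarrow> traj \<Rightarrow> real" where
  "wealth V n h j S = V + (\<Sum>i<min j n. strat h i S * (S (Suc i) - S i))"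

definition wealth_inf :: "real \<Rightarrow> nat \<Rightarrow> (nat \<Rightarrow> real list \<Rightarrow> real) \<Rightarrow> traj \<Rightarrow> real" where
  "wealth_inf V n h S = wealth V n h n S"

definition positive_portfolio :: "traj set \<Rightarrow> real \<Rightarrow> nat \<Rightarrow> (nat \<Rightarrow> real list \<Rightarrow> real) \<Rightarrow> bool" where
  "positive_portfolio \<S> V n h \<longleftrightarrow> V \<ge> 0 \<and> (\<forall>S\<in>\<S>. wealth_inf V n h S \<ge> 0)"

definition node :: "traj set \<Rightarrow> traj \<Rightarrow> nat \<Rightarrow> traj set" where
  "node \<S> S j = {T \<in> \<S>. \<forall>k\<le>j. T k = S k}"

definition arbitrage_node :: "traj set \<Rightarrow> traj \<Rightarrow> nat \<Rightarrow> bool" where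
  "arbitrage_node \<S> S j \<longleftrightarrow> (\<exists>\<epsilon>\<in>{-1,1::real}.
     (\<forall>T\<in>node \<S> S j. \<epsilon> * (T (Suc j) - S j) \<ge> 0) \<and>
     (\<exists>T\<in>node \<S> S j. \<epsilon> * (T (Suc j) - S j) > 0))"

definition type_I_node :: "traj set \<Rightarrow> traj \<Rightarrow> nat \<Rightarrow> bool" where
  "type_I_node \<S> S j \<longleftrightarrow> (\<exists>T\<in>node \<S> S j. T (Suc j) = S j)"

definition arbitrage_node_type_II :: "traj set \<Rightarrow> traj \<Rightarrow> nat \<Rightarrow> bool" where
  "arbitrage_node_type_II \<S> S j \<longleftrightarrow> arbitrage_node \<S> S j \<and> \<not> type_I_node \<S> S j"

end

theory Submission
  imports Defs
begin

text \<open>Backward induction from maturity: at a node that is not a type II arbitrage node, whatever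
  position is held, some continuation of the node does not gain from it, so if the wealth is
  nonnegative on every trajectory one step later, it is nonnegative at the node itself.\<close>

lemma wealth_after_maturity:
  assumes "n \<le> j"
  shows "wealth V n h j S = wealth V n h n S"
  using assms unfolding wealth_def by simp

lemma strat_node_eq:
  assumes "T \<in> node \<S> S k" "i \<le> k"
  shows "strat h i T = strat h i S"
  using assms unfolding strat_def node_def by (intro arg_cong[where f = "h i"]) auto

lemma wealth_Suc_node:
  assumes "T \<in> node \<S> S k" "k < n"
  shows "wealth V n h (Suc k) T = wealth V n h k S + strat h k S * (T (Suc k) - S k)"
proof -
  have eq: "T i = S i" if "i \<le> k" for i
    using assms(1) that unfolding node_def by auto
  have "(\<Sum>i<k. strat h i T * (T (Suc i) - T i)) = (\<Sum>i<k. strat h i S * (S (Suc i) - S i))"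
    using assms(1) by (intro sum.cong) (auto simp: strat_node_eq eq)
  moreover have "min (Suc k) n = Suc k" "min k n = k"
    using assms(2) by auto
  ultimately show ?thesis
    unfolding wealth_def using strat_node_eq[OF assms(1), of k] eq[of k] by simp
qed

lemma self_in_node: "S \<in> \<S> \<Longrightarrow> S \<in> node \<S> S k"
  unfolding node_def by auto

lemma node_subset: "node \<S> S k \<subseteq> \<S>"
  unfolding node_def by auto

lemma non_arbitrage_node_no_sure_gain:
  assumes "S \<in> \<S>" "\<not> arbitrage_node \<S> S k"
  shows "\<exists>T\<in>node \<S> S k. c * (T (Suc k) - S k) \<le> 0"
proof -
  define \<epsilon> :: real where "\<epsilon> = (if c \<ge> 0 then 1 else -1)"
  have c: "c = \<bar>c\<bar> * \<epsilon>" and \<epsilon>: "\<epsilon> \<in> {-1, 1}"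
    unfolding \<epsilon>_def by auto
  have loss: "c * (T (Suc k) - S k) \<le> 0" if "\<epsilon> * (T (Suc k) - S k) \<le> 0" for T
    using mult_left_mono[OF that abs_ge_zero[of c]] by (subst c) (simp add: mult.assoc)
  from assms(2) \<epsilon> consider
      (down) T where "T \<in> node \<S> S k" "\<epsilon> * (T (Suc k) - S k) < 0"
    | (flat) "\<forall>T\<in>node \<S> S k. \<epsilon> * (T (Suc k) - S k) \<le> 0"
    unfolding arbitrage_node_def by (meson not_le)
  then show ?thesis
  proof cases
    case down
    then show ?thesis using loss by force
  next
    case flat
    then show ?thesis using loss self_in_node[OF assms(1)] by blast
  qed
qed

lemma no_type_II_arbitrage_no_sure_gain:
  assumes "S \<in> \<S>" "\<not> arbitrage_node_type_II \<S> S k"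
  shows "\<exists>T\<in>node \<S> S k. c * (T (Suc k) - S k) \<le> 0"
proof (cases "type_I_node \<S> S k")
  case True
  then show ?thesis unfolding type_I_node_def by force
next
  case False
  then show ?thesis
    using assms non_arbitrage_node_no_sure_gain unfolding arbitrage_node_type_II_def by blast
qed

lemma wealth_nonneg_step_back:
  assumes "S \<in> \<S>" "\<not> arbitrage_node_type_II \<S> S k" "k < n"
    and "\<forall>T\<in>\<S>. wealth V n h (Suc k) T \<ge> 0"
  shows "wealth V n h k S \<ge> 0"
proof -
  obtain T where T: "T \<in> node \<S> S k" "strat h k S * (T (Suc k) - S k) \<le> 0"
    using no_type_II_arbitrage_no_sure_gain[OF assms(1,2)] by blast
  have "wealth V n h (Suc k) T \<ge> 0"
    using assms(4) T(1) node_subset by blast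
  with T(2) show ?thesis
    unfolding wealth_Suc_node[OF T(1) assms(3)] by linarith
qed

lemma wealth_nonneg_before_maturity:
  assumes no_arb: "\<forall>S\<in>\<S>. \<forall>k<n. \<not> arbitrage_node_type_II \<S> S k"
    and final: "\<forall>S\<in>\<S>. wealth V n h n S \<ge> 0"
    and "j \<le> n" "S \<in> \<S>"
  shows "wealth V n h j S \<ge> 0"
  using assms(3,4)
proof (induction j arbitrary: S rule: inc_induct)
  case base
  then show ?case using final by blast
next
  case (step k)
  then show ?case using wealth_nonneg_step_back no_arb by blast
qed

theorem lemma5p7:
  fixes s0 :: real and \<S> :: "traj set" and n0 n :: nat and V :: real
    and h :: "nat \<Rightarrow> real list \<Rightarrow> real"
  assumes "trajectory_set s0 \<S>"
    and "n0 \<ge> 1"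
    and "\<forall>S\<in>\<S>. \<forall>j. j + 1 \<le> n0 \<longrightarrow> \<not> arbitrage_node_type_II \<S> S j"
    and "n \<ge> 1" and "n \<le> n0"
    and "positive_portfolio \<S> V n h"
  shows "\<forall>j. \<forall>S\<in>\<S>. wealth V n h j S \<ge> 0"
proof (intro allI ballI)
  fix j S assume S: "S \<in> \<S>"
  have no_arb: "\<forall>S\<in>\<S>. \<forall>k<n. \<not> arbitrage_node_type_II \<S> S k"
    using assms(3,5) by auto
  have final: "\<forall>S\<in>\<S>. wealth V n h n S \<ge> 0"
    using assms(6) unfolding positive_portfolio_def wealth_inf_def by blast
  show "wealth V n h j S \<ge> 0"
  proof (cases "j \<le> n")
    case True
    then show ?thesis using wealth_nonneg_before_maturity[OF no_arb final _ S] by blast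
  next
    case False
    then show ?thesis using final S wealth_after_maturity[of n j] by simp
  qed
qed

end
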